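(* Let $(C,\mathfrak p,\mathfrak d)$ be a regular $q$-magma coalgebra. Then $(C,\mathfrak p,\mathfrak d)$ is a $q$-cycle coalgebra if and only if for all $i,j,k\in\{0,\dots,n-1\}$: $$\sum_{a+b=j}\sum_{h=0}^i\sum_{l=0}^k\mathfrak p_{ia}^h\mathfrak d_{kb}^l\mathfrak p_{hl}^1=\sum_{c+d=k}\sum_{h=0}^i\sum_{l=0}^j\mathfrak p_{ic}^h\mathfrak p_{jd}^l\mathfrak p_{hl}^1,$$ $$\sum_{a+b=j}\sum_{h=0}^i\sum_{l=0}^k\mathfrak p_{ia}^h\mathfrak p_{kb}^l\mathfrak d_{hl}^1=\sum_{c+d=k}\sum_{h=0}^i\sum_{l=0}^j\mathfrak d_{ic}^h\mathfrak d_{jd}^l\mathfrak p_{hl}^1,$$ $$\sum_{a+b=j}\sum_{h=0}^i\sum_{l=0}^k\mathfrak d_{ia}^h\mathfrak p_{kb}^l\mathfrak d_{hl}^1=\sum_{c+d=k}\sum_{h=0}^i\sum_{l=0}^j\mathfrak d_{ic}^h\mathfrak d_{jd}^l\mathfrak d_{hl}^1.$$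
   Context: $K$ is an algebraically closed field of characteristic $0$ and $n\ge2$. $C$ is the coalgebra dual to $K[y]/\langle y^n\rangle$: basis $x_0,\dots,x_{n-1}$, $\Delta(x_i)=\sum_{j+k=i}x_j\otimes x_k$, $\epsilon(x_i)=\delta_{i0}$; $C\otimes C$ has the tensor product coalgebra structure; Sweedler notation $\Delta(b)=b_{(1)}\otimes b_{(2)}$. For linear maps $\mathfrak p,\mathfrak d\colon C\otimes C\to C$ write $a\cdot b=\mathfrak p(a\otimes b)$, $a:b=\mathfrak d(a\otimes b)$, $\mathfrak p(x_i\otimes x_j)=\sum_{k=0}^{n-1}\mathfrak p_{ij}^kx_k$, $\mathfrak d(x_i\otimes x_j)=\sum_{k=0}^{n-1}\mathfrak d_{ij}^kx_k$, with the convention $\mathfrak p_{ij}^k=\mathfrak d_{ij}^k=0$ if $k\ge n$, $i<0$ or $j<0$; sums over $a+b=j$, $c+d=k$ range over nonnegative integers. A triple $(C,\mathfrak p,\mathfrak d)$ with $\mathfrak p,\mathfrak d$ coalgebra morphisms is a regular $q$-magma coalgebra if there are coalgebra morphisms $a\otimes b\mapsto a^b$, $a\otimes b\mapsto a_b$ from $C\otimes C$ to $C$ with $a^{b_{(1)}}\cdot b_{(2)}=(a\cdot b_{(1)})^{b_{(2)}}=\epsilon(b)a$ and $(a:b_{(2)})_{b_{(1)}}=a_{b_{(2)}}:b_{(1)}=\epsilon(b)a$. It is a ($q$-cycle, i.e. regular) $q$-cycle coalgebra if moreover for all $a,b,c\in C$: (1) $(a\cdot b_{(1)})\cdot(c:b_{(2)})=(a\cdot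 c_{(2)})\cdot(b\cdot c_{(1)})$; (2) $(a\cdot b_{(1)}):(c\cdot b_{(2)})=(a:c_{(2)})\cdot(b:c_{(1)})$; (3) $(a:b_{(1)}):(c:b_{(2)})=(a:c_{(2)}):(b\cdot c_{(1)})$. *)

theory Defs
  imports "HOL-Computational_Algebra.Polynomial"
begin

text \<open>The coalgebra C dual to K[y]/(y^n) is modelled concretely: an element of C is a
coefficient function u :: nat => K with u k = 0 for k >= n (u = sum_k u k x_k).
A linear map C (x) C -> C is given by its structure constants P i j k (the coefficient of
x_k in the image of x_i (x) x_j), for i, j, k < n; values outside this range are ignored.\<close>

definition inC :: "nat \<Rightarrow> (nat \<Rightarrow> 'a::zero) \<Rightarrow> bool" where
  "inC n u \<longleftrightarrow> (\<forall>k\<ge>n. u k = 0)"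

definition xb :: "nat \<Rightarrow> nat \<Rightarrow> 'a::{zero,one}" where
  "xb i = (\<lambda>k. if k = i then 1 else 0)"

definition eps :: "(nat \<Rightarrow> 'a) \<Rightarrow> 'a" where
  "eps u = u 0"

definition bop :: "nat \<Rightarrow> (nat \<Rightarrow> nat \<Rightarrow> nat \<Rightarrow> 'a::comm_ring_1)
    \<Rightarrow> (nat \<Rightarrow> 'a) \<Rightarrow> (nat \<Rightarrow> 'a) \<Rightarrow> (nat \<Rightarrow> 'a)" where
  "bop n P u v = (\<lambda>k. if k < n then (\<Sum>i<n. \<Sum>j<n. u i * v j * P i j k) else 0)"

text \<open>Sweedler expression F(b_(1), b_(2)) for F linear on C (x) C:
  since Delta(x_j) = sum_{s+t=j} x_s (x) x_t, this is sum_j b_j sum_{s+t=j} F(x_s, x_t).\<close>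
definition swe :: "nat \<Rightarrow> (nat \<Rightarrow> 'a::comm_ring_1)
    \<Rightarrow> ((nat \<Rightarrow> 'a) \<Rightarrow> (nat \<Rightarrow> 'a) \<Rightarrow> (nat \<Rightarrow> 'a)) \<Rightarrow> (nat \<Rightarrow> 'a)" where
  "swe n b F = (\<lambda>k. \<Sum>j<n. b j * (\<Sum>s\<le>j. F (xb s) (xb (j - s)) k))"

text \<open>P : C (x) C -> C is a coalgebra morphism (C (x) C with the tensor product coalgebra
  structure): epsilon(P(x_i (x) x_j)) = epsilon(x_i) epsilon(x_j) and
  Delta(P(x_i (x) x_j)) = sum_{a+b=i} sum_{c+d=j} P(x_a (x) x_c) (x) P(x_b (x) x_d),
  compared coefficientwise at x_u (x) x_v.\<close>
definition coalg_mor :: "nat \<Rightarrow> (nat \<Rightarrow> nat \<Rightarrow> nat \<Rightarrow> 'a::comm_ring_1) \<Rightarrow> bool" where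
  "coalg_mor n P \<longleftrightarrow>
     (\<forall>i<n. \<forall>j<n.
        P i j 0 = (if i = 0 \<and> j = 0 then 1 else 0) \<and>
        (\<forall>u<n. \<forall>v<n.
           (if u + v < n then P i j (u + v) else 0) =
           (\<Sum>a\<le>i. \<Sum>c\<le>j. P a c u * P (i - a) (j - c) v)))"

text \<open>regular q-magma coalgebra (C, p, d); Q gives a^b, R gives a_b\<close>
definition regular_qmagma ::
    "nat \<Rightarrow> (nat \<Rightarrow> nat \<Rightarrow> nat \<Rightarrow> 'a::comm_ring_1) \<Rightarrow> (nat \<Rightarrow> nat \<Rightarrow> nat \<Rightarrow> 'a) \<Rightarrow> bool" where
  "regular_qmagma n p d \<longleftrightarrow>
     coalg_mor n p \<and> coalg_mor n d \<and>
     (\<exists>Q R. coalg_mor n Q \<and> coalg_mor n R \<and>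
        (\<forall>a b. inC n a \<longrightarrow> inC n b \<longrightarrow>
           swe n b (\<lambda>s t. bop n p (bop n Q a s) t) = (\<lambda>k. eps b * a k) \<and>
           swe n b (\<lambda>s t. bop n Q (bop n p a s) t) = (\<lambda>k. eps b * a k) \<and>
           swe n b (\<lambda>s t. bop n R (bop n d a t) s) = (\<lambda>k. eps b * a k) \<and>
           swe n b (\<lambda>s t. bop n d (bop n R a t) s) = (\<lambda>k. eps b * a k)))"

definition qcycle_coalg ::
    "nat \<Rightarrow> (nat \<Rightarrow> nat \<Rightarrow> nat \<Rightarrow> 'a::comm_ring_1) \<Rightarrow> (nat \<Rightarrow> nat \<Rightarrow> nat \<Rightarrow> 'a) \<Rightarrow> bool" where
  "qcycle_coalg n p d \<longleftrightarrow>
     regular_qmagma n p d \<and>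
     (\<forall>a b c. inC n a \<longrightarrow> inC n b \<longrightarrow> inC n c \<longrightarrow>
        swe n b (\<lambda>s t. bop n p (bop n p a s) (bop n d c t)) =
          swe n c (\<lambda>s t. bop n p (bop n p a t) (bop n p b s)) \<and>
        swe n b (\<lambda>s t. bop n d (bop n p a s) (bop n p c t)) =
          swe n c (\<lambda>s t. bop n p (bop n d a t) (bop n d b s)) \<and>
        swe n b (\<lambda>s t. bop n d (bop n d a s) (bop n d c t)) =
          swe n c (\<lambda>s t. bop n d (bop n d a t) (bop n p b s)))"

end

theory Submission
  imports Defs
begin

text \<open>Dually, a coalgebra morphism X : C \<otimes> C \<rightarrow> C is an algebra map
  K[y]/(y^n) \<rightarrow> K[s,t]/(s^n,t^n); it is determined by the image f = \<Sum> X i j 1 s^i t^j of y,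
  and X i j m is the coefficient of s^i t^j in f^m. Since f^n = 0, f has no constant term.
  Regularity makes the coefficient of s in f nonzero for X = p and X = d; comparing coefficients
  of s^(n-1) t^r in f^n = 0 then removes all pure powers of t from f, so that X i j m = 0 whenever
  i < m. Each q-cycle identity compares two coalgebra morphisms C \<otimes> C \<otimes> C \<rightarrow> C, which
  agree as soon as their x_1-coefficients agree; by the vanishing just described these coefficients
  are the truncated sums of the statement.\<close>

lemma sum_eq_single:
  assumes "finite S" "y \<in> S" "\<And>x. x \<in> S \<Longrightarrow> x \<noteq> y \<Longrightarrow> f x = 0"
  shows "sum f S = f y"
proof -
  have "sum f {y} = sum f S" using assms by (intro sum.mono_neutral_left) auto
  then show ?thesis by simp
qed

lemma sum_eq_two:
  assumes "finite S" "y \<in> S" "z \<in> S" "y \<noteq> z"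
    and "\<And>x. x \<in> S \<Longrightarrow> x \<noteq> y \<Longrightarrow> x \<noteq> z \<Longrightarrow> f x = 0"
  shows "sum f S = f y + f z"
proof -
  have "sum f {y, z} = sum f S" using assms by (intro sum.mono_neutral_left) auto
  then show ?thesis using assms by simp
qed

lemma sum_atMost_reflect: "(\<Sum>s\<le>j. F s (j - s)) = (\<Sum>s\<le>(j::nat). F (j - s) s)"
  by (rule sum.reindex_bij_witness[where i="\<lambda>s. j - s" and j="\<lambda>s. j - s"]) auto

lemma sum_atMost_diff_if:
  fixes F :: "nat \<Rightarrow> 'a::comm_monoid_add"
  shows "(if m \<le> j then \<Sum>b\<le>j - m. F b else 0) = (\<Sum>b\<le>j. if m + b \<le> j then F b else 0)"
proof -
  have "{b \<in> {..j}. m + b \<le> j} = (if m \<le> j then {..j - m} else {})" by auto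
  then show ?thesis by (simp add: sum.inter_filter[symmetric])
qed

lemma sum_antidiagonal_lessThan:
  fixes g :: "nat \<Rightarrow> nat \<Rightarrow> 'a::comm_monoid_add"
  shows "(\<Sum>h<n. \<Sum>h1\<le>h. g h1 (h - h1)) = (\<Sum>h1<n. \<Sum>h2<n. if h1 + h2 < n then g h1 h2 else 0)"
proof -
  have "(\<Sum>h<n. \<Sum>h1\<le>h. g h1 (h - h1)) = (\<Sum>(i, j)\<in>{(i, j). i + j < n}. g i j)"
    by (rule sum.triangle_reindex[symmetric])
  also have "{(i, j). i + j < n} = {x \<in> {..<n} \<times> {..<n}. fst x + snd x < n}" by auto
  also have "(\<Sum>(i, j)\<in>\<dots>. g i j) =
      (\<Sum>x\<in>{..<n} \<times> {..<n}. if fst x + snd x < n then g (fst x) (snd x) else 0)"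
    by (subst sum.inter_filter[symmetric]) (auto simp: case_prod_beta)
  finally show ?thesis by (simp add: sum.cartesian_product case_prod_beta)
qed

lemma sum_antidiagonal_atMost:
  fixes g :: "nat \<Rightarrow> nat \<Rightarrow> 'a::comm_monoid_add"
  shows "(\<Sum>h\<le>n. \<Sum>h1\<le>h. g h1 (h - h1)) = (\<Sum>h1\<le>n. \<Sum>h2\<le>n. if h1 + h2 \<le> n then g h1 h2 else 0)"
  using sum_antidiagonal_lessThan[of g "Suc n"] by (simp only: lessThan_Suc_atMost less_Suc_eq_le)

lemma sum_antidiagonal_regroup:
  fixes f :: "nat \<Rightarrow> nat \<Rightarrow> nat \<Rightarrow> nat \<Rightarrow> 'a::comm_monoid_add"
  shows "(\<Sum>a\<le>j. \<Sum>a1\<le>a. \<Sum>b1\<le>j - a. f a1 (a - a1) b1 (j - a - b1)) =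
    (\<Sum>j1\<le>j. \<Sum>a1\<le>j1. \<Sum>a2\<le>j - j1. f a1 a2 (j1 - a1) (j - j1 - a2))"
proof -
  have "(\<Sum>a\<le>j. \<Sum>a1\<le>a. \<Sum>b1\<le>j - a. f a1 (a - a1) b1 (j - a - b1)) =
     (\<Sum>a1\<le>j. \<Sum>a2\<le>j. if a1 + a2 \<le> j then \<Sum>b1\<le>j - (a1 + a2). f a1 a2 b1 (j - (a1 + a2) - b1) else 0)"
    using sum_antidiagonal_atMost[of "\<lambda>x y. \<Sum>b1\<le>j - (x + y). f x y b1 (j - (x + y) - b1)"] by simp
  also have "\<dots> = (\<Sum>a1\<le>j. \<Sum>a2\<le>j. \<Sum>b1\<le>j. if a1 + a2 + b1 \<le> j then f a1 a2 b1 (j - a1 - a2 - b1) else 0)"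
    by (intro sum.cong refl, subst sum_atMost_diff_if, intro sum.cong refl) (simp add: add_ac)
  also have "\<dots> = (\<Sum>a1\<le>j. \<Sum>b1\<le>j. \<Sum>a2\<le>j. if a1 + a2 + b1 \<le> j then f a1 a2 b1 (j - a1 - a2 - b1) else 0)"
    by (intro sum.cong refl sum.swap)
  also have "\<dots> = (\<Sum>a1\<le>j. \<Sum>b1\<le>j. if a1 + b1 \<le> j then \<Sum>a2\<le>j - (a1 + b1). f a1 a2 b1 (j - (a1 + b1) - a2) else 0)"
    by (intro sum.cong refl, subst sum_atMost_diff_if, intro sum.cong refl) (simp add: add_ac)
  also have "\<dots> = (\<Sum>j1\<le>j. \<Sum>a1\<le>j1. \<Sum>a2\<le>j - j1. f a1 a2 (j1 - a1) (j - j1 - a2))"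
    using sum_antidiagonal_atMost[of "\<lambda>x y. \<Sum>a2\<le>j - (x + y). f x a2 y (j - (x + y) - a2)"] by simp
  finally show ?thesis .
qed

lemma sum_swap_innermost2:
  "(\<Sum>x\<in>X. \<Sum>p\<in>P. \<Sum>q\<in>Q. f x p q) = (\<Sum>p\<in>P. \<Sum>q\<in>Q. \<Sum>x\<in>X. f x p q)"
  by (simp only: sum.swap[where A = X])

lemma sum_swap_innermost4:
  "(\<Sum>x\<in>X. \<Sum>p\<in>P. \<Sum>q\<in>Q. \<Sum>r\<in>R. \<Sum>s\<in>S. f x p q r s) =
   (\<Sum>p\<in>P. \<Sum>q\<in>Q. \<Sum>r\<in>R. \<Sum>s\<in>S. \<Sum>x\<in>X. f x p q r s)"
  by (simp only: sum.swap[where A = X])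

lemma sum_swap_blocks2:
  "(\<Sum>x1\<in>X1. \<Sum>x2\<in>X2. \<Sum>y1\<in>Y1. \<Sum>y2\<in>Y2. f x1 x2 y1 y2) =
   (\<Sum>y1\<in>Y1. \<Sum>y2\<in>Y2. \<Sum>x1\<in>X1. \<Sum>x2\<in>X2. f x1 x2 y1 y2)"
  by (simp only: sum_swap_innermost2[where X = X2] sum_swap_innermost2[where X = X1])

lemma sum_swap_blocks4:
  "(\<Sum>x1\<in>X1. \<Sum>x2\<in>X2. \<Sum>x3\<in>X3. \<Sum>x4\<in>X4. \<Sum>y1\<in>Y1. \<Sum>y2\<in>Y2. \<Sum>y3\<in>Y3. \<Sum>y4\<in>Y4.
      f x1 x2 x3 x4 y1 y2 y3 y4) =
   (\<Sum>y1\<in>Y1. \<Sum>y2\<in>Y2. \<Sum>y3\<in>Y3. \<Sum>y4\<in>Y4. \<Sum>x1\<in>X1. \<Sum>x2\<in>X2. \<Sum>x3\<in>X3. \<Sum>x4\<in>X4.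
      f x1 x2 x3 x4 y1 y2 y3 y4)"
  by (simp only: sum_swap_innermost4[where X = X4] sum_swap_innermost4[where X = X3]
      sum_swap_innermost4[where X = X2] sum_swap_innermost4[where X = X1])

section \<open>Coalgebra morphisms \<open>C \<otimes> C \<rightarrow> C\<close>\<close>

lemma coalg_morD:
  "coalg_mor n P \<Longrightarrow> i < n \<Longrightarrow> j < n \<Longrightarrow> u < n \<Longrightarrow> v < n \<Longrightarrow>
   (if u + v < n then P i j (u + v) else 0) = (\<Sum>a\<le>i. \<Sum>c\<le>j. P a c u * P (i - a) (j - c) v)"
  unfolding coalg_mor_def by blast

lemma coalg_mor_counit:
  "coalg_mor n P \<Longrightarrow> i < n \<Longrightarrow> j < n \<Longrightarrow> P i j 0 = (if i = 0 \<and> j = 0 then 1 else 0)"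
  unfolding coalg_mor_def by blast

lemma coalg_mor_0_0_1_eq_0:
  fixes X :: "nat \<Rightarrow> nat \<Rightarrow> nat \<Rightarrow> 'a::idom"
  assumes X: "coalg_mor n X" and n: "2 \<le> n"
  shows "X 0 0 1 = 0"
proof -
  have mult: "(if 1 + m < n then X 0 0 (1 + m) else 0) = X 0 0 1 * X 0 0 m" if "m < n" for m
    using coalg_morD[OF X _ _ _ that, of 0 0 1] n by simp
  have pow: "X 0 0 m = X 0 0 1 ^ m" if "m < n" for m
    using that
  proof (induction m)
    case 0 then show ?case using coalg_mor_counit[OF X, of 0 0] by simp
  next
    case (Suc m) then show ?case using mult[of m] by simp
  qed
  obtain N where N: "n = Suc N" using n by (cases n) auto
  have "X 0 0 1 ^ n = X 0 0 1 * X 0 0 N" using pow[of N] N by simp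
  also have "\<dots> = 0" using mult[of N] N by simp
  finally show ?thesis by simp
qed

text \<open>Dually: if f has no pure powers of t below t^r, then every monomial s^a t^c of f^h
  with a < h has c \<ge> r (h - a).\<close>

lemma coalg_mor_vanish:
  fixes X :: "nat \<Rightarrow> nat \<Rightarrow> nat \<Rightarrow> 'a::comm_ring_1"
  assumes X: "coalg_mor n X" and r: "1 \<le> r" and pure: "\<And>c. c < r \<Longrightarrow> X 0 c 1 = 0"
  shows "h < n \<Longrightarrow> a < h \<Longrightarrow> c < n \<Longrightarrow> c < r * (h - a) \<Longrightarrow> X a c h = 0"
proof (induction h arbitrary: a c)
  case 0 then show ?case by simp
next
  case (Suc h)
  have "X a c (1 + h) = (\<Sum>a1\<le>a. \<Sum>c1\<le>c. X a1 c1 1 * X (a - a1) (c - c1) h)"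
    using coalg_morD[OF X, of a c 1 h] Suc.prems by simp
  also have "\<dots> = 0"
  proof (intro sum.neutral ballI)
    fix a1 c1 assume a1: "a1 \<in> {..a}" and c1: "c1 \<in> {..c}"
    consider "a1 = 0" "c1 < r" | "a1 = 0" "r \<le> c1" | "0 < a1" by linarith
    then show "X a1 c1 1 * X (a - a1) (c - c1) h = 0"
    proof cases
      case 1 then show ?thesis using pure by simp
    next
      case 2
      have "r * (Suc h - a) = r + r * (h - a)" using Suc.prems by (simp add: Suc_diff_le)
      then have "c - c1 < r * (h - a)" using Suc.prems 2 c1 by simp
      moreover from this have "a < h" by (cases "a < h") auto
      ultimately have "X a (c - c1) h = 0" using Suc.IH Suc.prems by simp
      then show ?thesis using 2 by simp
    next
      case 3
      have "r * (Suc h - a) \<le> r * (h - (a - a1))"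
        using 3 Suc.prems a1 by (intro mult_le_mono2) auto
      then have "c - c1 < r * (h - (a - a1))" using Suc.prems by linarith
      moreover have "a - a1 < h" using 3 Suc.prems a1 by auto
      ultimately have "X (a - a1) (c - c1) h = 0" using Suc.IH Suc.prems by simp
      then show ?thesis by simp
    qed
  qed
  finally show ?case by simp
qed

lemma coalg_mor_diagonal:
  fixes X :: "nat \<Rightarrow> nat \<Rightarrow> nat \<Rightarrow> 'a::idom"
  assumes X: "coalg_mor n X" and n: "2 \<le> n"
  shows "a < n \<Longrightarrow> X a 0 a = X 1 0 1 ^ a"
proof (induction a)
  case 0 then show ?case using coalg_mor_counit[OF X, of 0 0] by simp
next
  case (Suc a)
  have "X (Suc a) 0 (1 + a) = (\<Sum>a1\<le>Suc a. X a1 0 1 * X (Suc a - a1) 0 a)"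
    using coalg_morD[OF X, of "Suc a" 0 1 a] Suc.prems by simp
  also have "\<dots> = X 1 0 1 * X a 0 a"
  proof (subst sum_eq_single[of _ 1])
    fix a1 assume "a1 \<in> {..Suc a}" "a1 \<noteq> 1"
    then show "X a1 0 1 * X (Suc a - a1) 0 a = 0"
      using coalg_mor_0_0_1_eq_0[OF X n] coalg_mor_vanish[OF X order.refl, of a "Suc a - a1" 0] Suc.prems
      by (cases "a1 = 0") auto
  qed auto
  finally show ?case using Suc by simp
qed

lemma coalg_mor_off_diagonal:
  fixes X :: "nat \<Rightarrow> nat \<Rightarrow> nat \<Rightarrow> 'a::idom"
  assumes X: "coalg_mor n X" and n: "2 \<le> n" and r: "1 \<le> r" "r < n"
    and pure: "\<And>c. c < r \<Longrightarrow> X 0 c 1 = 0"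
  shows "Suc g < n \<Longrightarrow> X g r (Suc g) = of_nat (Suc g) * X 1 0 1 ^ g * X 0 r 1"
proof (induction g)
  case 0 then show ?case by simp
next
  case (Suc g)
  let ?T = "\<lambda>a1 c1. X a1 c1 1 * X (Suc g - a1) (r - c1) (Suc g)"
  note vanish = coalg_mor_vanish[OF X r(1) pure]
  have "X (Suc g) r (1 + Suc g) = (\<Sum>a1\<le>Suc g. \<Sum>c1\<le>r. ?T a1 c1)"
    using coalg_morD[OF X, of "Suc g" r 1 "Suc g"] Suc.prems r by simp
  also have "\<dots> = (\<Sum>c1\<le>r. ?T 0 c1) + (\<Sum>c1\<le>r. ?T 1 c1)"
  proof (rule sum_eq_two)
    fix a1 assume a1: "a1 \<in> {..Suc g}" "a1 \<noteq> 0" "a1 \<noteq> 1"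
    show "(\<Sum>c1\<le>r. ?T a1 c1) = 0"
    proof (intro sum.neutral ballI)
      fix c1
      have "r * 2 \<le> r * a1" using a1 by (intro mult_le_mono2) auto
      then have "r - c1 < r * a1" using r by linarith
      then have "X (Suc g - a1) (r - c1) (Suc g) = 0"
        using vanish[of "Suc g" "Suc g - a1" "r - c1"] a1 Suc.prems r by auto
      then show "?T a1 c1 = 0" by simp
    qed
  qed auto
  also have "(\<Sum>c1\<le>r. ?T 0 c1) = ?T 0 r"
    by (rule sum_eq_single) (use pure in auto)
  also have "(\<Sum>c1\<le>r. ?T 1 c1) = ?T 1 0"
  proof (rule sum_eq_single)
    fix c1 assume "c1 \<in> {..r}" "c1 \<noteq> 0"
    then have "X g (r - c1) (Suc g) = 0" using vanish[of "Suc g" g "r - c1"] Suc.prems r by auto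
    then show "?T 1 c1 = 0" by simp
  qed auto
  also have "?T 0 r = X 0 r 1 * X 1 0 1 ^ Suc g"
    using coalg_mor_diagonal[OF X n, of "Suc g"] Suc.prems by simp
  also have "?T 1 0 = X 1 0 1 * (of_nat (Suc g) * X 1 0 1 ^ g * X 0 r 1)"
    using Suc.IH Suc.prems by simp
  finally show ?case by (simp add: algebra_simps)
qed

text \<open>Dually: once f has no pure powers of t below t^r, the coefficient of s^(n-1) t^r
  in f^n = 0 is n (X 1 0 1)^(n-1) (X 0 r 1).\<close>

lemma coalg_mor_0_c_1_eq_0_step:
  fixes X :: "nat \<Rightarrow> nat \<Rightarrow> nat \<Rightarrow> 'a::{idom, ring_char_0}"
  assumes X: "coalg_mor n X" and n: "2 \<le> n" and r: "1 \<le> r" "r < n"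
    and pure: "\<And>c. c < r \<Longrightarrow> X 0 c 1 = 0" and nz: "X 1 0 1 \<noteq> 0"
  shows "X 0 r 1 = 0"
proof -
  obtain N where N: "n = Suc (Suc N)" using n by (metis add_2_eq_Suc le_Suc_ex)
  let ?T = "\<lambda>a c. X a c (Suc N) * X (Suc N - a) (r - c) 1"
  note vanish = coalg_mor_vanish[OF X r(1) pure]
  have "0 = (\<Sum>a\<le>Suc N. \<Sum>c\<le>r. ?T a c)"
    using coalg_morD[OF X, of "Suc N" r "Suc N" 1] N r by simp
  also have "\<dots> = (\<Sum>c\<le>r. ?T (Suc N) c) + (\<Sum>c\<le>r. ?T N c)"
  proof (rule sum_eq_two)
    fix a assume a: "a \<in> {..Suc N}" "a \<noteq> Suc N" "a \<noteq> N"
    show "(\<Sum>c\<le>r. ?T a c) = 0"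
    proof (intro sum.neutral ballI)
      fix c assume c: "c \<in> {..r}"
      have "r * 2 \<le> r * (Suc N - a)" using a by (intro mult_le_mono2) auto
      then have "c < r * (Suc N - a)" using c r by (simp only: atMost_iff)
      then have "X a c (Suc N) = 0" using vanish[of "Suc N" a c] a c N r by auto
      then show "?T a c = 0" by simp
    qed
  qed auto
  also have "(\<Sum>c\<le>r. ?T (Suc N) c) = ?T (Suc N) 0"
    by (rule sum_eq_single) (use pure in auto)
  also have "(\<Sum>c\<le>r. ?T N c) = ?T N r"
  proof (rule sum_eq_single)
    fix c assume "c \<in> {..r}" "c \<noteq> r"
    then have "X N c (Suc N) = 0" using vanish[of "Suc N" N c] N r by auto
    then show "?T N c = 0" by simp
  qed auto
  also have "?T (Suc N) 0 = X 1 0 1 ^ Suc N * X 0 r 1"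
    using coalg_mor_diagonal[OF X n, of "Suc N"] N by simp
  also have "?T N r = of_nat (Suc N) * X 1 0 1 ^ N * X 0 r 1 * X 1 0 1"
    using coalg_mor_off_diagonal[OF X n r pure, of N] N by simp
  finally have "0 = of_nat (Suc (Suc N)) * X 1 0 1 ^ Suc N * X 0 r 1"
    by (simp add: algebra_simps)
  then show ?thesis using nz by (simp del: of_nat_Suc)
qed

lemma coalg_mor_0_c_1_eq_0:
  fixes X :: "nat \<Rightarrow> nat \<Rightarrow> nat \<Rightarrow> 'a::{idom, ring_char_0}"
  assumes X: "coalg_mor n X" and n: "2 \<le> n" and nz: "X 1 0 1 \<noteq> 0"
  shows "c < n \<Longrightarrow> X 0 c 1 = 0"
proof (induction c rule: less_induct)
  case (less c)
  show ?case
  proof (cases "c = 0")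
    case True then show ?thesis using coalg_mor_0_0_1_eq_0[OF X n] by simp
  next
    case False
    then show ?thesis using coalg_mor_0_c_1_eq_0_step[OF X n _ less.prems _ nz] less by auto
  qed
qed

lemma coalg_mor_triangular:
  fixes X :: "nat \<Rightarrow> nat \<Rightarrow> nat \<Rightarrow> 'a::{idom, ring_char_0}"
  assumes X: "coalg_mor n X" and n: "2 \<le> n" and nz: "X 1 0 1 \<noteq> 0"
    and "a < n" "h < n" "i < h"
  shows "X i a h = 0"
proof -
  have "n * 1 \<le> n * (h - i)" using assms by (intro mult_le_mono2) auto
  then have "a < n * (h - i)" using assms by linarith
  then show ?thesis
    using coalg_mor_vanish[OF X _ coalg_mor_0_c_1_eq_0[OF X n nz], of n h i a] assms by auto
qed

section \<open>Ternary coalgebra morphisms\<close>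

definition comp_coef :: "nat \<Rightarrow> (nat \<Rightarrow> nat \<Rightarrow> nat \<Rightarrow> 'a::comm_ring_1) \<Rightarrow> (nat \<Rightarrow> nat \<Rightarrow> nat \<Rightarrow> 'a)
    \<Rightarrow> (nat \<Rightarrow> nat \<Rightarrow> nat \<Rightarrow> 'a) \<Rightarrow> nat \<Rightarrow> nat \<Rightarrow> nat \<Rightarrow> nat \<Rightarrow> nat \<Rightarrow> 'a" where
  "comp_coef n A B E i a k b m = (\<Sum>h<n. \<Sum>l<n. A i a h * B k b l * E h l m)"

definition cycle_coef :: "nat \<Rightarrow> (nat \<Rightarrow> nat \<Rightarrow> nat \<Rightarrow> 'a::comm_ring_1) \<Rightarrow> (nat \<Rightarrow> nat \<Rightarrow> nat \<Rightarrow> 'a)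
    \<Rightarrow> (nat \<Rightarrow> nat \<Rightarrow> nat \<Rightarrow> 'a) \<Rightarrow> nat \<Rightarrow> nat \<Rightarrow> nat \<Rightarrow> nat \<Rightarrow> 'a" where
  "cycle_coef n A B E i j k m = (\<Sum>a\<le>j. comp_coef n A B E i a k (j - a) m)"

definition coalg_mor3 :: "nat \<Rightarrow> (nat \<Rightarrow> nat \<Rightarrow> nat \<Rightarrow> nat \<Rightarrow> 'a::comm_ring_1) \<Rightarrow> bool" where
  "coalg_mor3 n T \<longleftrightarrow>
     (\<forall>i<n. \<forall>j<n. \<forall>k<n.
        T i j k 0 = (if i = 0 \<and> j = 0 \<and> k = 0 then 1 else 0) \<and>
        (\<forall>u<n. \<forall>v<n.
           (if u + v < n then T i j k (u + v) else 0) =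
           (\<Sum>i1\<le>i. \<Sum>j1\<le>j. \<Sum>k1\<le>k. T i1 j1 k1 u * T (i - i1) (j - j1) (k - k1) v)))"

lemma coalg_mor3D:
  "coalg_mor3 n T \<Longrightarrow> i < n \<Longrightarrow> j < n \<Longrightarrow> k < n \<Longrightarrow> u < n \<Longrightarrow> v < n \<Longrightarrow>
   (if u + v < n then T i j k (u + v) else 0) =
   (\<Sum>i1\<le>i. \<Sum>j1\<le>j. \<Sum>k1\<le>k. T i1 j1 k1 u * T (i - i1) (j - j1) (k - k1) v)"
  unfolding coalg_mor3_def by blast

lemma coalg_mor3_counit:
  "coalg_mor3 n T \<Longrightarrow> i < n \<Longrightarrow> j < n \<Longrightarrow> k < n \<Longrightarrow>
   T i j k 0 = (if i = 0 \<and> j = 0 \<and> k = 0 then 1 else 0)"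
  unfolding coalg_mor3_def by blast

lemma comp_coef_counit:
  assumes E: "coalg_mor n E" and "0 < n"
  shows "comp_coef n A B E i a k b 0 = A i a 0 * B k b 0"
proof -
  have "comp_coef n A B E i a k b 0 =
      (\<Sum>h<n. \<Sum>l<n. if h = 0 then if l = 0 then A i a 0 * B k b 0 else 0 else 0)"
    unfolding comp_coef_def using coalg_mor_counit[OF E] by (intro sum.cong refl) auto
  then show ?thesis using \<open>0 < n\<close> by (simp add: sum.If_cases)
qed

lemma comp_coef_comult:
  assumes A: "coalg_mor n A" and B: "coalg_mor n B" and E: "coalg_mor n E"
    and lt: "i < n" "a < n" "k < n" "b < n" "u < n" "v < n"
  shows "(if u + v < n then comp_coef n A B E i a k b (u + v) else 0) =
    (\<Sum>i1\<le>i. \<Sum>a1\<le>a. \<Sum>k1\<le>k. \<Sum>b1\<le>b.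
       comp_coef n A B E i1 a1 k1 b1 u * comp_coef n A B E (i - i1) (a - a1) (k - k1) (b - b1) v)"
proof -
  have "(if u + v < n then comp_coef n A B E i a k b (u + v) else 0) =
      (\<Sum>h<n. \<Sum>l<n. A i a h * B k b l * (if u + v < n then E h l (u + v) else 0))"
    by (simp add: comp_coef_def)
  also have "\<dots> = (\<Sum>h<n. \<Sum>l<n. A i a h * B k b l *
      (\<Sum>h1\<le>h. \<Sum>l1\<le>l. E h1 l1 u * E (h - h1) (l - l1) v))"
    using coalg_morD[OF E _ _ lt(5,6)] by simp
  also have "\<dots> = (\<Sum>h<n. \<Sum>h1\<le>h. \<Sum>l<n. \<Sum>l1\<le>l.
      A i a (h1 + (h - h1)) * B k b (l1 + (l - l1)) * (E h1 l1 u * E (h - h1) (l - l1) v))"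
    by (rule sum.cong[OF refl], simp add: sum_distrib_left, rule sum.swap)
  also have "\<dots> = (\<Sum>h1<n. \<Sum>h2<n. \<Sum>l1<n. \<Sum>l2<n.
      (if h1 + h2 < n then A i a (h1 + h2) else 0) * (if l1 + l2 < n then B k b (l1 + l2) else 0)
        * (E h1 l1 u * E h2 l2 v))"
    by (subst sum_antidiagonal_lessThan[where g = "\<lambda>h1 h2. \<Sum>l<n. \<Sum>l1\<le>l.
          A i a (h1 + h2) * B k b (l1 + (l - l1)) * (E h1 l1 u * E h2 (l - l1) v)"],
        (rule sum.cong[OF refl])+,
        subst sum_antidiagonal_lessThan[where g = "\<lambda>l1 l2.
          A i a (_ + _) * B k b (l1 + l2) * (E _ l1 u * E _ l2 v)"])
      (auto intro!: sum.cong)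
  also have "\<dots> = (\<Sum>h1<n. \<Sum>h2<n. \<Sum>l1<n. \<Sum>l2<n.
      (\<Sum>i1\<le>i. \<Sum>a1\<le>a. A i1 a1 h1 * A (i - i1) (a - a1) h2) *
      (\<Sum>k1\<le>k. \<Sum>b1\<le>b. B k1 b1 l1 * B (k - k1) (b - b1) l2) * (E h1 l1 u * E h2 l2 v))"
    using coalg_morD[OF A lt(1,2)] coalg_morD[OF B lt(3,4)] by (intro sum.cong refl) simp
  also have "\<dots> = (\<Sum>h1<n. \<Sum>l1<n. \<Sum>h2<n. \<Sum>l2<n.
      \<Sum>i1\<le>i. \<Sum>a1\<le>a. \<Sum>k1\<le>k. \<Sum>b1\<le>b.
      (A i1 a1 h1 * B k1 b1 l1 * E h1 l1 u) * (A (i - i1) (a - a1) h2 * B (k - k1) (b - b1) l2 * E h2 l2 v))"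
    by (rule sum.cong[OF refl], rule trans[OF sum.swap], intro sum.cong refl,
        simp only: sum_distrib_right, simp only: sum_distrib_left sum_distrib_right,
        intro sum.cong refl)
      (simp only: mult_ac)
  also have "\<dots> = (\<Sum>i1\<le>i. \<Sum>a1\<le>a. \<Sum>k1\<le>k. \<Sum>b1\<le>b. \<Sum>h1<n. \<Sum>l1<n. \<Sum>h2<n. \<Sum>l2<n.
      (A i1 a1 h1 * B k1 b1 l1 * E h1 l1 u) * (A (i - i1) (a - a1) h2 * B (k - k1) (b - b1) l2 * E h2 l2 v))"
    by (rule sum_swap_blocks4)
  also have "\<dots> = (\<Sum>i1\<le>i. \<Sum>a1\<le>a. \<Sum>k1\<le>k. \<Sum>b1\<le>b.
      comp_coef n A B E i1 a1 k1 b1 u * comp_coef n A B E (i - i1) (a - a1) (k - k1) (b - b1) v)"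
    unfolding comp_coef_def by (simp only: sum_distrib_right, simp only: sum_distrib_left)
  finally show ?thesis .
qed

lemma cycle_coef_counit:
  assumes A: "coalg_mor n A" and B: "coalg_mor n B" and E: "coalg_mor n E"
    and lt: "i < n" "j < n" "k < n"
  shows "cycle_coef n A B E i j k 0 = (if i = 0 \<and> j = 0 \<and> k = 0 then 1 else 0)"
proof -
  have "cycle_coef n A B E i j k 0 = (\<Sum>a\<le>j. A i a 0 * B k (j - a) 0)"
    unfolding cycle_coef_def using comp_coef_counit[OF E] lt by simp
  also have "\<dots> = (\<Sum>a\<le>j. if a = 0 then (if i = 0 \<and> j = 0 \<and> k = 0 then 1 else 0) else 0)"
    using coalg_mor_counit[OF A] coalg_mor_counit[OF B] lt by (intro sum.cong refl) auto
  finally show ?thesis by simp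
qed

lemma cycle_coef_comult:
  assumes A: "coalg_mor n A" and B: "coalg_mor n B" and E: "coalg_mor n E"
    and lt: "i < n" "j < n" "k < n" "u < n" "v < n"
  shows "(if u + v < n then cycle_coef n A B E i j k (u + v) else 0) =
    (\<Sum>i1\<le>i. \<Sum>j1\<le>j. \<Sum>k1\<le>k. cycle_coef n A B E i1 j1 k1 u * cycle_coef n A B E (i - i1) (j - j1) (k - k1) v)"
proof -
  let ?H = "comp_coef n A B E"
  have "(if u + v < n then cycle_coef n A B E i j k (u + v) else 0) =
      (\<Sum>a\<le>j. if u + v < n then ?H i a k (j - a) (u + v) else 0)"
    by (simp add: cycle_coef_def)
  also have "\<dots> = (\<Sum>a\<le>j. \<Sum>i1\<le>i. \<Sum>a1\<le>a. \<Sum>k1\<le>k. \<Sum>b1\<le>j - a.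
      ?H i1 a1 k1 b1 u * ?H (i - i1) (a - a1) (k - k1) (j - a - b1) v)"
    using lt by (intro sum.cong refl comp_coef_comult[OF A B E]) auto
  also have "\<dots> = (\<Sum>i1\<le>i. \<Sum>k1\<le>k. \<Sum>a\<le>j. \<Sum>a1\<le>a. \<Sum>b1\<le>j - a.
      ?H i1 a1 k1 b1 u * ?H (i - i1) (a - a1) (k - k1) (j - a - b1) v)"
    by (subst sum.swap, rule sum.cong[OF refl]) (simp only: sum.swap[where B = "{..k}"])
  also have "\<dots> = (\<Sum>i1\<le>i. \<Sum>k1\<le>k. \<Sum>j1\<le>j. \<Sum>a1\<le>j1. \<Sum>a2\<le>j - j1.
      ?H i1 a1 k1 (j1 - a1) u * ?H (i - i1) a2 (k - k1) (j - j1 - a2) v)"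
    by (intro sum.cong refl sum_antidiagonal_regroup)
  also have "\<dots> = (\<Sum>i1\<le>i. \<Sum>j1\<le>j. \<Sum>k1\<le>k.
      cycle_coef n A B E i1 j1 k1 u * cycle_coef n A B E (i - i1) (j - j1) (k - k1) v)"
    unfolding cycle_coef_def by (rule sum.cong[OF refl], subst sum.swap) (simp add: sum_product)
  finally show ?thesis .
qed

lemma coalg_mor3_cycle_coef:
  assumes "coalg_mor n A" "coalg_mor n B" "coalg_mor n E"
  shows "coalg_mor3 n (cycle_coef n A B E)"
  unfolding coalg_mor3_def using cycle_coef_counit[OF assms] cycle_coef_comult[OF assms] by blast

lemma coalg_mor3_swap23:
  assumes "coalg_mor3 n T"
  shows "coalg_mor3 n (\<lambda>i j k. T i k j)"
  unfolding coalg_mor3_def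
proof (intro allI impI conjI)
  fix i j k u v assume lt: "i < n" "j < n" "k < n"
  show "T i k j 0 = (if i = 0 \<and> j = 0 \<and> k = 0 then 1 else 0)"
    using coalg_mor3_counit[OF assms lt(1,3,2)] by auto
  assume "u < n" "v < n"
  then have "(if u + v < n then T i k j (u + v) else 0) =
      (\<Sum>i1\<le>i. \<Sum>k1\<le>k. \<Sum>j1\<le>j. T i1 k1 j1 u * T (i - i1) (k - k1) (j - j1) v)"
    using coalg_mor3D[OF assms lt(1,3,2)] by blast
  also have "\<dots> = (\<Sum>i1\<le>i. \<Sum>j1\<le>j. \<Sum>k1\<le>k. T i1 k1 j1 u * T (i - i1) (k - k1) (j - j1) v)"
    by (intro sum.cong refl sum.swap)
  finally show "(if u + v < n then T i k j (u + v) else 0) =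
      (\<Sum>i1\<le>i. \<Sum>j1\<le>j. \<Sum>k1\<le>k. T i1 k1 j1 u * T (i - i1) (k - k1) (j - j1) v)" .
qed

text \<open>Dually, T is an algebra map out of K[y]/(y^n), so it is determined by the image of y.\<close>

lemma coalg_mor3_eqI:
  assumes T: "coalg_mor3 n T" and S: "coalg_mor3 n S"
    and one: "\<And>i j k. i < n \<Longrightarrow> j < n \<Longrightarrow> k < n \<Longrightarrow> T i j k 1 = S i j k 1"
  shows "i < n \<Longrightarrow> j < n \<Longrightarrow> k < n \<Longrightarrow> m < n \<Longrightarrow> T i j k m = S i j k m"
proof (induction m arbitrary: i j k rule: less_induct)
  case (less m)
  consider "m = 0" | "m = 1" | "2 \<le> m" by linarith
  then show ?case
  proof cases
    case 1 then show ?thesis using coalg_mor3_counit[OF T] coalg_mor3_counit[OF S] less.prems by simp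
  next
    case 2 then show ?thesis using one less.prems by simp
  next
    case 3
    then have m: "m = 1 + (m - 1)" and lt: "1 < n" "m - 1 < n" using less.prems by auto
    have "T i j k m = (if 1 + (m - 1) < n then T i j k (1 + (m - 1)) else 0)"
      using m less.prems by simp
    also have "\<dots> = (\<Sum>i1\<le>i. \<Sum>j1\<le>j. \<Sum>k1\<le>k. T i1 j1 k1 1 * T (i - i1) (j - j1) (k - k1) (m - 1))"
      by (rule coalg_mor3D[OF T less.prems(1-3) lt])
    also have "\<dots> = (\<Sum>i1\<le>i. \<Sum>j1\<le>j. \<Sum>k1\<le>k. S i1 j1 k1 1 * S (i - i1) (j - j1) (k - k1) (m - 1))"
      using one less.IH[of "m - 1"] less.prems lt 3 by (intro sum.cong refl) auto
    also have "\<dots> = (if 1 + (m - 1) < n then S i j k (1 + (m - 1)) else 0)"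
      by (rule coalg_mor3D[OF S less.prems(1-3) lt, symmetric])
    also have "\<dots> = S i j k m"
      using m less.prems by simp
    finally show ?thesis .
  qed
qed

section \<open>Sweedler expressions in coordinates\<close>

lemma inC_xb: "i < n \<Longrightarrow> inC n (xb i)"
  by (simp add: inC_def xb_def)

lemma sum_xb_mult:
  fixes G :: "nat \<Rightarrow> 'a::comm_ring_1"
  assumes "k < n"
  shows "(\<Sum>k'<n. xb k k' * G k') = G k"
  using assms by (subst sum_eq_single[of _ k]) (auto simp: xb_def)

lemma sum3_xb_mult:
  fixes F :: "nat \<Rightarrow> nat \<Rightarrow> nat \<Rightarrow> 'a::comm_ring_1"
  assumes "i < n" "j < n" "k < n"
  shows "(\<Sum>i'<n. \<Sum>j'<n. \<Sum>k'<n. xb i i' * xb j j' * xb k k' * F i' j' k') = F i j k"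
proof -
  have "(\<Sum>i'<n. \<Sum>j'<n. \<Sum>k'<n. xb i i' * xb j j' * xb k k' * F i' j' k') =
      (\<Sum>i'<n. xb i i' * (\<Sum>j'<n. xb j j' * (\<Sum>k'<n. xb k k' * F i' j' k')))"
    by (simp add: sum_distrib_left mult.assoc)
  also have "\<dots> = F i j k" using assms by (simp add: sum_xb_mult)
  finally show ?thesis .
qed

lemma bop_xb_right:
  fixes A :: "nat \<Rightarrow> nat \<Rightarrow> nat \<Rightarrow> 'a::comm_ring_1"
  assumes "s < n"
  shows "bop n A a (xb s) = (\<lambda>h. if h < n then \<Sum>i<n. a i * A i s h else 0)"
  unfolding bop_def xb_def using assms
  by (auto intro!: ext sum.cong simp: if_distrib[of "\<lambda>x. _ * x"] if_distrib[of "\<lambda>x. x * _"] sum.delta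
      cong: if_cong)

lemma bop_bop_xb:
  fixes A B E :: "nat \<Rightarrow> nat \<Rightarrow> nat \<Rightarrow> 'a::comm_ring_1"
  assumes "s < n" "t < n" "m < n"
  shows "bop n E (bop n A a (xb s)) (bop n B c (xb t)) m =
    (\<Sum>i<n. \<Sum>k<n. a i * c k * comp_coef n A B E i s k t m)"
proof -
  have "bop n E (bop n A a (xb s)) (bop n B c (xb t)) m =
      (\<Sum>h<n. \<Sum>l<n. (\<Sum>i<n. a i * A i s h) * (\<Sum>k<n. c k * B k t l) * E h l m)"
    unfolding bop_xb_right[OF assms(1)] bop_xb_right[OF assms(2)] using assms by (simp add: bop_def)
  also have "\<dots> = (\<Sum>h<n. \<Sum>l<n. \<Sum>i<n. \<Sum>k<n. a i * A i s h * (c k * B k t l) * E h l m)"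
    by (simp only: sum_distrib_right, simp only: sum_distrib_left sum_distrib_right)
  also have "\<dots> = (\<Sum>i<n. \<Sum>k<n. \<Sum>h<n. \<Sum>l<n. a i * A i s h * (c k * B k t l) * E h l m)"
    by (rule sum_swap_blocks2)
  also have "\<dots> = (\<Sum>i<n. \<Sum>k<n. a i * c k * comp_coef n A B E i s k t m)"
    unfolding comp_coef_def by (simp only: sum_distrib_left mult_ac)
  finally show ?thesis .
qed

lemma swe_flip: "swe n b F = swe n b (\<lambda>s t. F t s)"
  unfolding swe_def by (intro ext sum.cong refl arg_cong2[where f = "(*)"] sum_atMost_reflect)

lemma swe_cycle_coef:
  fixes A B E :: "nat \<Rightarrow> nat \<Rightarrow> nat \<Rightarrow> 'a::comm_ring_1"
  shows "swe n b (\<lambda>s t. bop n E (bop n A a s) (bop n B c t)) m =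
    (if m < n then \<Sum>i<n. \<Sum>j<n. \<Sum>k<n. a i * b j * c k * cycle_coef n A B E i j k m else 0)"
proof (cases "m < n")
  case True
  have "swe n b (\<lambda>s t. bop n E (bop n A a s) (bop n B c t)) m = (\<Sum>j<n. b j *
      (\<Sum>s\<le>j. \<Sum>i<n. \<Sum>k<n. a i * c k * comp_coef n A B E i s k (j - s) m))"
    unfolding swe_def using True by (intro sum.cong refl arg_cong2[where f = "(*)"] bop_bop_xb) auto
  also have "\<dots> = (\<Sum>j<n. \<Sum>i<n. \<Sum>k<n. a i * b j * c k * cycle_coef n A B E i j k m)"
    unfolding cycle_coef_def
  proof (intro sum.cong refl)
    fix j
    have "b j * (\<Sum>s\<le>j. \<Sum>i<n. \<Sum>k<n. a i * c k * comp_coef n A B E i s k (j - s) m) =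
        (\<Sum>s\<le>j. \<Sum>i<n. \<Sum>k<n. b j * (a i * c k * comp_coef n A B E i s k (j - s) m))"
      by (simp only: sum_distrib_left)
    also have "\<dots> = (\<Sum>i<n. \<Sum>k<n. \<Sum>s\<le>j. b j * (a i * c k * comp_coef n A B E i s k (j - s) m))"
      by (rule sum_swap_innermost2)
    finally show "b j * (\<Sum>s\<le>j. \<Sum>i<n. \<Sum>k<n. a i * c k * comp_coef n A B E i s k (j - s) m) =
        (\<Sum>i<n. \<Sum>k<n. a i * b j * c k * (\<Sum>s\<le>j. comp_coef n A B E i s k (j - s) m))"
      by (simp only: sum_distrib_left mult_ac)
  qed
  also have "\<dots> = (\<Sum>i<n. \<Sum>j<n. \<Sum>k<n. a i * b j * c k * cycle_coef n A B E i j k m)"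
    by (rule sum.swap)
  finally show ?thesis using True by simp
qed (simp add: swe_def bop_def)

lemma swe_cycle_coef_flip:
  fixes A B E :: "nat \<Rightarrow> nat \<Rightarrow> nat \<Rightarrow> 'a::comm_ring_1"
  shows "swe n c (\<lambda>s t. bop n E (bop n A a t) (bop n B b s)) m =
    (if m < n then \<Sum>i<n. \<Sum>j<n. \<Sum>k<n. a i * b j * c k * cycle_coef n A B E i k j m else 0)"
proof -
  have "(\<Sum>i<n. \<Sum>k<n. \<Sum>j<n. a i * c k * b j * cycle_coef n A B E i k j m) =
      (\<Sum>i<n. \<Sum>j<n. \<Sum>k<n. a i * b j * c k * cycle_coef n A B E i k j m)"
    by (rule sum.cong[OF refl], rule trans[OF sum.swap], intro sum.cong refl) (simp only: mult_ac)
  then show ?thesis by (subst swe_flip) (simp only: swe_cycle_coef)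
qed

lemma sweedler_identity_iff_cycle_coef:
  fixes A B E A' B' E' :: "nat \<Rightarrow> nat \<Rightarrow> nat \<Rightarrow> 'a::comm_ring_1"
  assumes A: "coalg_mor n A" and B: "coalg_mor n B" and E: "coalg_mor n E"
    and A': "coalg_mor n A'" and B': "coalg_mor n B'" and E': "coalg_mor n E'"
    and n: "2 \<le> n"
  shows "(\<forall>a b c. inC n a \<longrightarrow> inC n b \<longrightarrow> inC n c \<longrightarrow>
            swe n b (\<lambda>s t. bop n E (bop n A a s) (bop n B c t)) =
            swe n c (\<lambda>s t. bop n E' (bop n A' a t) (bop n B' b s)))
      \<longleftrightarrow> (\<forall>i<n. \<forall>j<n. \<forall>k<n. cycle_coef n A B E i j k 1 = cycle_coef n A' B' E' i k j 1)"
    (is "(\<forall>a b c. _ \<longrightarrow> _ \<longrightarrow> _ \<longrightarrow> ?L a b c = ?R a b c) \<longleftrightarrow> ?coef")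
proof
  assume H: "\<forall>a b c. inC n a \<longrightarrow> inC n b \<longrightarrow> inC n c \<longrightarrow> ?L a b c = ?R a b c"
  show ?coef
  proof (intro allI impI)
    fix i j k assume lt: "i < n" "j < n" "k < n"
    have "?L (xb i) (xb j) (xb k) 1 = ?R (xb i) (xb j) (xb k) 1"
      using H lt inC_xb by metis
    then show "cycle_coef n A B E i j k 1 = cycle_coef n A' B' E' i k j 1"
      using n sum3_xb_mult[OF lt, of "\<lambda>i j k. cycle_coef n A B E i j k 1"]
        sum3_xb_mult[OF lt, of "\<lambda>i j k. cycle_coef n A' B' E' i k j 1"]
      by (simp only: swe_cycle_coef swe_cycle_coef_flip) simp
  qed
next
  assume ?coef
  then have "cycle_coef n A B E i j k m = cycle_coef n A' B' E' i k j m"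
    if "i < n" "j < n" "k < n" "m < n" for i j k m
    using coalg_mor3_eqI[OF coalg_mor3_cycle_coef[OF A B E]
        coalg_mor3_swap23[OF coalg_mor3_cycle_coef[OF A' B' E']]] that by simp
  then show "\<forall>a b c. inC n a \<longrightarrow> inC n b \<longrightarrow> inC n c \<longrightarrow> ?L a b c = ?R a b c"
    by (auto simp: swe_cycle_coef swe_cycle_coef_flip)
qed

lemma cycle_coef_1_truncate:
  fixes A B E :: "nat \<Rightarrow> nat \<Rightarrow> nat \<Rightarrow> 'a::{idom, ring_char_0}"
  assumes A: "coalg_mor n A" and B: "coalg_mor n B" and n: "2 \<le> n"
    and nz: "A 1 0 1 \<noteq> 0" "B 1 0 1 \<noteq> 0" and lt: "i < n" "j < n" "k < n"
  shows "cycle_coef n A B E i j k 1 = (\<Sum>a\<le>j. \<Sum>h\<le>i. \<Sum>l\<le>k. A i a h * B k (j - a) l * E h l 1)"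
  unfolding cycle_coef_def comp_coef_def
proof (rule sum.cong[OF refl])
  fix a assume a: "a \<in> {..j}"
  have "(\<Sum>h<n. \<Sum>l<n. A i a h * B k (j - a) l * E h l 1) = (\<Sum>h\<le>i. \<Sum>l<n. A i a h * B k (j - a) l * E h l 1)"
    using coalg_mor_triangular[OF A n nz(1)] a lt by (intro sum.mono_neutral_right) auto
  also have "\<dots> = (\<Sum>h\<le>i. \<Sum>l\<le>k. A i a h * B k (j - a) l * E h l 1)"
    using coalg_mor_triangular[OF B n nz(2)] a lt by (intro sum.cong refl sum.mono_neutral_right) auto
  finally show "(\<Sum>h<n. \<Sum>l<n. A i a h * B k (j - a) l * E h l 1) =
      (\<Sum>h\<le>i. \<Sum>l\<le>k. A i a h * B k (j - a) l * E h l 1)" .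
qed

lemma sweedler_identity_iff:
  fixes A B E A' B' E' :: "nat \<Rightarrow> nat \<Rightarrow> nat \<Rightarrow> 'a::{idom, ring_char_0}"
  assumes A: "coalg_mor n A" and B: "coalg_mor n B" and E: "coalg_mor n E"
    and A': "coalg_mor n A'" and B': "coalg_mor n B'" and E': "coalg_mor n E'"
    and n: "2 \<le> n"
    and nz: "A 1 0 1 \<noteq> 0" "B 1 0 1 \<noteq> 0" "A' 1 0 1 \<noteq> 0" "B' 1 0 1 \<noteq> 0"
  shows "(\<forall>a b c. inC n a \<longrightarrow> inC n b \<longrightarrow> inC n c \<longrightarrow>
            swe n b (\<lambda>s t. bop n E (bop n A a s) (bop n B c t)) =
            swe n c (\<lambda>s t. bop n E' (bop n A' a t) (bop n B' b s)))
      \<longleftrightarrow> (\<forall>i<n. \<forall>j<n. \<forall>k<n.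
            (\<Sum>a\<le>j. \<Sum>h\<le>i. \<Sum>l\<le>k. A i a h * B k (j - a) l * E h l 1) =
            (\<Sum>c\<le>k. \<Sum>h\<le>i. \<Sum>l\<le>j. A' i c h * B' j (k - c) l * E' h l 1))"
  unfolding sweedler_identity_iff_cycle_coef[OF A B E A' B' E' n]
  using cycle_coef_1_truncate[OF A B n nz(1,2)] cycle_coef_1_truncate[OF A' B' n nz(3,4)] by simp

lemma swe_xb_0: "0 < n \<Longrightarrow> swe n (xb 0) F = F (xb 0) (xb 0)"
  unfolding swe_def xb_def by (auto intro!: ext simp: if_distrib[of "\<lambda>x. x * _"] sum.delta cong: if_cong)

lemma bop_bop_xb_1_0:
  fixes X :: "nat \<Rightarrow> nat \<Rightarrow> nat \<Rightarrow> 'a::idom"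
  assumes X: "coalg_mor n X" and n: "2 \<le> n"
  shows "bop n Y (bop n X (xb 1) (xb 0)) (xb 0) 1 = X 1 0 1 * Y 1 0 1"
proof -
  have "0 < n" using n by simp
  then have "bop n Y (bop n X (xb 1) (xb 0)) (xb 0) 1 = (\<Sum>h<n. X 1 0 h * Y h 0 1)"
    using n unfolding bop_xb_right[OF \<open>0 < n\<close>] by (simp add: sum_xb_mult)
  also have "\<dots> = X 1 0 1 * Y 1 0 1"
  proof (rule sum_eq_single)
    fix h assume "h \<in> {..<n}" "h \<noteq> 1"
    then have "X 1 0 h = 0"
      using coalg_mor_counit[OF X, of 1 0] coalg_mor_0_0_1_eq_0[OF X n]
        coalg_mor_vanish[OF X order.refl, of h 1 0] n by (cases "h = 0") auto
    then show "X 1 0 h * Y h 0 1 = 0" by simp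
  qed (use n in auto)
  finally show ?thesis .
qed

lemma regular_qmagma_coef_1_0_1_nonzero:
  fixes p d :: "nat \<Rightarrow> nat \<Rightarrow> nat \<Rightarrow> 'a::idom"
  assumes reg: "regular_qmagma n p d" and n: "2 \<le> n"
  shows "p 1 0 1 \<noteq> 0" "d 1 0 1 \<noteq> 0"
proof -
  from reg obtain Q R where p: "coalg_mor n p" and d: "coalg_mor n d" and
    inv: "\<And>a b. inC n a \<Longrightarrow> inC n b \<Longrightarrow>
           swe n b (\<lambda>s t. bop n Q (bop n p a s) t) = (\<lambda>k. eps b * a k) \<and>
           swe n b (\<lambda>s t. bop n R (bop n d a t) s) = (\<lambda>k. eps b * a k)"
    unfolding regular_qmagma_def by blast
  have x: "inC n (xb 1)" "inC n (xb 0)" and "0 < n" using n by (auto intro: inC_xb)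
  have one: "eps (xb 0) * xb 1 1 = (1::'a)" by (simp add: eps_def xb_def)
  have "bop n Q (bop n p (xb 1) (xb 0)) (xb 0) 1 = 1"
    using fun_cong[OF conjunct1[OF inv[OF x]], of 1] by (simp only: swe_xb_0[OF \<open>0 < n\<close>] one)
  moreover have "bop n R (bop n d (xb 1) (xb 0)) (xb 0) 1 = 1"
    using fun_cong[OF conjunct2[OF inv[OF x]], of 1] by (simp only: swe_xb_0[OF \<open>0 < n\<close>] one)
  ultimately show "p 1 0 1 \<noteq> 0" "d 1 0 1 \<noteq> 0"
    using bop_bop_xb_1_0[OF p n, of Q] bop_bop_xb_1_0[OF d n, of R] by auto
qed

lemma all_lessThan_swap_eq:
  "(\<forall>i<n. \<forall>j<n. \<forall>k<n. f i j k = g i k j) \<longleftrightarrow> (\<forall>i<n. \<forall>j<n. \<forall>k<n. g i j k = f i k j)"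
  by auto

theorem proposition2p1:
  fixes n :: nat
    and p d :: "nat \<Rightarrow> nat \<Rightarrow> nat \<Rightarrow> 'a::{alg_closed_field, field_char_0}"
  assumes "n \<ge> 2"
    and "regular_qmagma n p d"
  shows "qcycle_coalg n p d \<longleftrightarrow>
    (\<forall>i<n. \<forall>j<n. \<forall>k<n.
      (\<Sum>a\<le>j. \<Sum>h\<le>i. \<Sum>l\<le>k. p i a h * d k (j - a) l * p h l 1) =
        (\<Sum>c\<le>k. \<Sum>h\<le>i. \<Sum>l\<le>j. p i c h * p j (k - c) l * p h l 1) \<and>
      (\<Sum>a\<le>j. \<Sum>h\<le>i. \<Sum>l\<le>k. p i a h * p k (j - a) l * d h l 1) =
        (\<Sum>c\<le>k. \<Sum>h\<le>i. \<Sum>l\<le>j. d i c h * d j (k - c) l * p h l 1) \<and>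
      (\<Sum>a\<le>j. \<Sum>h\<le>i. \<Sum>l\<le>k. d i a h * p k (j - a) l * d h l 1) =
        (\<Sum>c\<le>k. \<Sum>h\<le>i. \<Sum>l\<le>j. d i c h * d j (k - c) l * d h l 1))"
proof -
  have p: "coalg_mor n p" and d: "coalg_mor n d"
    using assms(2) unfolding regular_qmagma_def by auto
  note nz = regular_qmagma_coef_1_0_1_nonzero[OF assms(2,1)]
  note iff = sweedler_identity_iff[OF _ _ _ _ _ _ assms(1)]
  \<comment> \<open>the third q-cycle identity gives the third equation only after exchanging j and k\<close>
  have third: "(\<forall>i<n. \<forall>j<n. \<forall>k<n.
      (\<Sum>a\<le>j. \<Sum>h\<le>i. \<Sum>l\<le>k. d i a h * d k (j - a) l * d h l 1) =
        (\<Sum>c\<le>k. \<Sum>h\<le>i. \<Sum>l\<le>j. d i c h * p j (k - c) l * d h l 1)) \<longleftrightarrow>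
    (\<forall>i<n. \<forall>j<n. \<forall>k<n.
      (\<Sum>a\<le>j. \<Sum>h\<le>i. \<Sum>l\<le>k. d i a h * p k (j - a) l * d h l 1) =
        (\<Sum>c\<le>k. \<Sum>h\<le>i. \<Sum>l\<le>j. d i c h * d j (k - c) l * d h l 1))"
    by (rule all_lessThan_swap_eq)
  show ?thesis
    unfolding qcycle_coalg_def
    by (simp only: assms(2) simp_thms all_conj_distrib imp_conjR third
        iff[OF p d p p p p nz(1,2,1,1)] iff[OF p p d d d p nz(1,1,2,2)] iff[OF d d d d p d nz(2,2,2,1)])
qed

end
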